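(* For every triangle $K$, $$P^3(K)=\mathcal N(K)\oplus\big(\mathcal S(K)\oplus\langle 1^K\rangle\big),$$ where both sums are direct and $\mathcal N(K)$ is $L^2$-orthogonal to $\mathcal S(K)\oplus\langle1^K\rangle$.
   Context: For a triangle $K\subset\mathbb R^2$ and $k\ge0$, $P^k(K)$ denotes the set of functions which coincide with a polynomial of degree at most $k$ on $K$ and vanish outside $K$; $|K|$ is the area of $K$. For a vertex $\mathbf V$ of $K$, the sting function $\mathfrak s_{\mathbf VK}\in P^3(K)$ is the unique element such that $\int_K\mathfrak s_{\mathbf VK}\,q\,dx\,dy=\frac{|K|}{100}q(\mathbf V)$ for all polynomials $q$ of degree at most $3$. $\mathcal S(K)=\langle\mathfrak s_{\mathbf V_1K},\mathfrak s_{\mathbf V_2K},\mathfrak s_{\mathbf V_3K}\rangle$ where $\mathbf V_1,\mathbf V_2,\mathbf V_3$ are the vertices of $K$. $\mathcal B(K)=\{\mathbf v\in[P^4(K)]^2:\mathbf v=\mathbf 0\text{ on }\partial K\}$ and $\mathcal N(K)=\{\operatorname{div}\mathbf v:\mathbf v\in\mathcal B(K)\}$. $1^K\in P^3(K)$ is the function equal to $1$ on $K$, and $\langle\cdot\rangle$ denotes linear span. *)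

theory Defs
  imports "HOL-Analysis.Analysis"
begin

type_synonym pt = "real \<times> real"

definition poly2 :: "nat \<Rightarrow> (pt \<Rightarrow> real) \<Rightarrow> bool" where
  "poly2 k p \<longleftrightarrow> (\<exists>c :: nat \<Rightarrow> nat \<Rightarrow> real.
     \<forall>x y. p (x, y) = (\<Sum>i\<le>k. \<Sum>j\<le>k - i. c i j * x ^ i * y ^ j))"

definition ext0 :: "pt set \<Rightarrow> (pt \<Rightarrow> real) \<Rightarrow> (pt \<Rightarrow> real)" where
  "ext0 K p = (\<lambda>z. if z \<in> K then p z else 0)"

definition Pk :: "nat \<Rightarrow> pt set \<Rightarrow> (pt \<Rightarrow> real) set" where
  "Pk k K = {f. \<exists>p. poly2 k p \<and> f = ext0 K p}"

definition sting :: "pt \<Rightarrow> pt set \<Rightarrow> (pt \<Rightarrow> real)" where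
  "sting V K = (THE s. s \<in> Pk 3 K \<and>
     (\<forall>q. poly2 3 q \<longrightarrow> integral K (\<lambda>z. s z * q z) = measure lebesgue K / 100 * q V))"

definition Sspace :: "pt \<Rightarrow> pt \<Rightarrow> pt \<Rightarrow> (pt \<Rightarrow> real) set" where
  "Sspace a b c = (let K = convex hull {a, b, c} in
     {(\<lambda>z. \<alpha> * sting a K z + \<beta> * sting b K z + \<gamma> * sting c K z) | \<alpha> \<beta> \<gamma>. True})"

definition ConstSpan :: "pt set \<Rightarrow> (pt \<Rightarrow> real) set" where
  "ConstSpan K = {(\<lambda>z. t * ext0 K (\<lambda>_. 1) z) | t. True}"

text \<open>An element v of [P^4(K)]^2 is the zero extension of a pair of
  quartic polynomials (p1,p2) on K; v = 0 on the boundary of K means p1 = p2 = 0 on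
  frontier K; its divergence is the zero extension of dp1/dx + dp2/dy.\<close>
definition Nspace :: "pt set \<Rightarrow> (pt \<Rightarrow> real) set" where
  "Nspace K = {f. \<exists>p1 p2. poly2 4 p1 \<and> poly2 4 p2 \<and>
      (\<forall>z\<in>frontier K. p1 z = 0 \<and> p2 z = 0) \<and>
      f = ext0 K (\<lambda>z. deriv (\<lambda>t. p1 (t, snd z)) (fst z) + deriv (\<lambda>t. p2 (fst z, t)) (snd z))}"

definition fsum :: "(pt \<Rightarrow> real) set \<Rightarrow> (pt \<Rightarrow> real) set \<Rightarrow> (pt \<Rightarrow> real) set" where
  "fsum A B = {(\<lambda>z. f z + g z) | f g. f \<in> A \<and> g \<in> B}"

end

theory Submission
  imports Defs
begin

(* Let v be a quartic vector field vanishing on the boundary of K. Since v vanishes along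
   both edges at a vertex, its gradient vanishes there, so div v is zero at the vertices;
   integrating along horizontal and vertical slices shows that div v has zero mean. By the
   moment property of the stings this says exactly that N(K) is orthogonal to S(K) and to
   1^K, which gives the trivial intersection. Testing against the bubble function and the
   barycentric coordinates shows that the stings and 1^K are independent, and the
   divergences of the six fields bubble * l, l affine, are independent members of N(K).
   These ten cubics are independent, hence span the ten-dimensional space P^3(K). *)

section \<open>Bivariate polynomials\<close>

lemma poly2_monomial:
  assumes "i + j \<le> k"
  shows "poly2 k (\<lambda>z. r * fst z ^ i * snd z ^ j)"
proof -
  define c where "c i' j' = (if i' = i \<and> j' = j then r else 0)" for i' j'
  have "(\<Sum>i'\<le>k. \<Sum>j'\<le>k - i'. c i' j' * x ^ i' * y ^ j') = (\<Sum>i'\<le>k. if i' = i then r * x ^ i * y ^ j else 0)"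
    for x y
    by (rule sum.cong) (use assms in \<open>auto simp: c_def if_distrib[of "\<lambda>u. u * _"] cong: if_cong\<close>)
  then show ?thesis
    unfolding poly2_def using assms by (intro exI[of _ c]) simp
qed

lemma poly2_const: "poly2 k (\<lambda>_. r)"
  using poly2_monomial[of 0 0 k r] by simp

lemma poly2E:
  assumes "poly2 k p"
  obtains c where "p = (\<lambda>z. \<Sum>i\<le>k. \<Sum>j\<le>k - i. c i j * fst z ^ i * snd z ^ j)"
proof -
  obtain c where "\<forall>x y. p (x, y) = (\<Sum>i\<le>k. \<Sum>j\<le>k - i. c i j * x ^ i * y ^ j)"
    using assms unfolding poly2_def by blast
  then have "p = (\<lambda>z. \<Sum>i\<le>k. \<Sum>j\<le>k - i. c i j * fst z ^ i * snd z ^ j)"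
    by (simp add: fun_eq_iff)
  then show ?thesis by (rule that)
qed

lemma poly2_add:
  assumes "poly2 k p" "poly2 k q"
  shows "poly2 k (\<lambda>z. p z + q z)"
proof -
  obtain c d where c: "\<forall>x y. p (x, y) = (\<Sum>i\<le>k. \<Sum>j\<le>k - i. c i j * x ^ i * y ^ j)"
    and d: "\<forall>x y. q (x, y) = (\<Sum>i\<le>k. \<Sum>j\<le>k - i. d i j * x ^ i * y ^ j)"
    using assms unfolding poly2_def by blast
  have "p (x, y) + q (x, y) = (\<Sum>i\<le>k. \<Sum>j\<le>k - i. (c i j + d i j) * x ^ i * y ^ j)" for x y
    by (simp add: c d distrib_right sum.distrib)
  then show ?thesis
    unfolding poly2_def by (intro exI[of _ "\<lambda>i j. c i j + d i j"]) simp
qed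

lemma poly2_scale:
  assumes "poly2 k p"
  shows "poly2 k (\<lambda>z. r * p z)"
proof -
  obtain c where c: "\<forall>x y. p (x, y) = (\<Sum>i\<le>k. \<Sum>j\<le>k - i. c i j * x ^ i * y ^ j)"
    using assms unfolding poly2_def by blast
  have "r * p (x, y) = (\<Sum>i\<le>k. \<Sum>j\<le>k - i. (r * c i j) * x ^ i * y ^ j)" for x y
    by (simp add: c sum_distrib_left mult.assoc)
  then show ?thesis
    unfolding poly2_def by (intro exI[of _ "\<lambda>i j. r * c i j"]) simp
qed

lemma poly2_sum:
  assumes "finite A" "\<And>m. m \<in> A \<Longrightarrow> poly2 k (f m)"
  shows "poly2 k (\<lambda>z. \<Sum>m\<in>A. f m z)"
  using assms by (induction A rule: finite_induct) (auto intro: poly2_const poly2_add)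

lemma poly2_mult:
  assumes "poly2 k p" "poly2 l q"
  shows "poly2 (k + l) (\<lambda>z. p z * q z)"
proof -
  obtain c where p: "p = (\<lambda>z. \<Sum>i\<le>k. \<Sum>j\<le>k - i. c i j * fst z ^ i * snd z ^ j)"
    using assms(1) by (rule poly2E)
  obtain d where q: "q = (\<lambda>z. \<Sum>i\<le>l. \<Sum>j\<le>l - i. d i j * fst z ^ i * snd z ^ j)"
    using assms(2) by (rule poly2E)
  have "p z * q z = (\<Sum>i\<le>k. \<Sum>i'\<le>l. \<Sum>j\<le>k - i. \<Sum>j'\<le>l - i'.
      (c i j * d i' j') * fst z ^ (i + i') * snd z ^ (j + j'))" for z
    unfolding p q sum_product by (simp add: power_add mult_ac)
  moreover have "poly2 (k + l) (\<lambda>z. \<Sum>i\<le>k. \<Sum>i'\<le>l. \<Sum>j\<le>k - i. \<Sum>j'\<le>l - i'.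
      (c i j * d i' j') * fst z ^ (i + i') * snd z ^ (j + j'))"
    by (intro poly2_sum poly2_monomial) auto
  ultimately show ?thesis by simp
qed

lemma poly2_affine: "poly2 (Suc k) (\<lambda>z. u + v * fst z + w * snd z)"
proof -
  have "poly2 (Suc k) (\<lambda>z. v * fst z ^ 1 * snd z ^ 0)" "poly2 (Suc k) (\<lambda>z. w * fst z ^ 0 * snd z ^ 1)"
    by (intro poly2_monomial; simp)+
  then show ?thesis
    using poly2_add[OF poly2_add[OF poly2_const]] by simp
qed

lemma poly2_continuous_on:
  assumes "poly2 k p"
  shows "continuous_on S p"
proof -
  obtain c where "p = (\<lambda>z. \<Sum>i\<le>k. \<Sum>j\<le>k - i. c i j * fst z ^ i * snd z ^ j)"
    using assms by (rule poly2E)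
  then show ?thesis
    by (simp only:) (intro continuous_on_sum continuous_on_mult continuous_on_const
        continuous_on_power continuous_on_fst continuous_on_snd continuous_on_id)
qed

lemma bivariate_poly_coeffs_eq_0:
  fixes c :: "nat \<Rightarrow> nat \<Rightarrow> real"
  assumes X: "infinite X" and Y: "infinite Y"
    and zero: "\<And>x y. x \<in> X \<Longrightarrow> y \<in> Y \<Longrightarrow> (\<Sum>i\<le>k. \<Sum>j\<le>k - i. c i j * x ^ i * y ^ j) = 0"
    and "i + j \<le> k"
  shows "c i j = 0"
proof -
  have row_zero: "(\<Sum>j\<le>k - i. c i j * y ^ j) = 0" if "y \<in> Y" "i \<le> k" for y i
  proof (rule ccontr)
    assume "(\<Sum>j\<le>k - i. c i j * y ^ j) \<noteq> 0"
    with \<open>i \<le> k\<close> have "finite {x. (\<Sum>i\<le>k. (\<Sum>j\<le>k - i. c i j * y ^ j) * x ^ i) = 0}"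
      by (intro polyfun_rootbound_finite) blast
    moreover have "X \<subseteq> {x. (\<Sum>i\<le>k. (\<Sum>j\<le>k - i. c i j * y ^ j) * x ^ i) = 0}"
      using zero[OF _ \<open>y \<in> Y\<close>] by (auto simp: sum_distrib_left sum_distrib_right mult_ac)
    ultimately show False
      using X finite_subset by blast
  qed
  show ?thesis
  proof (rule ccontr)
    assume "c i j \<noteq> 0"
    with \<open>i + j \<le> k\<close> have "finite {y. (\<Sum>j\<le>k - i. c i j * y ^ j) = 0}"
      by (intro polyfun_rootbound_finite exI[of _ j]) auto
    moreover have "Y \<subseteq> {y. (\<Sum>j\<le>k - i. c i j * y ^ j) = 0}"
      using row_zero \<open>i + j \<le> k\<close> by auto
    ultimately show False
      using Y finite_subset by blast
  qed
qed

lemma bivariate_poly_coeffs_eq_0_on_open: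
  fixes c :: "nat \<Rightarrow> nat \<Rightarrow> real"
  assumes "open V" "z0 \<in> V"
    and zero: "\<And>z. z \<in> V \<Longrightarrow> (\<Sum>i\<le>k. \<Sum>j\<le>k - i. c i j * fst z ^ i * snd z ^ j) = 0"
    and "i + j \<le> k"
  shows "c i j = 0"
proof -
  obtain e where "0 < e" "ball z0 e \<subseteq> V"
    using assms(1,2) open_contains_ball by blast
  define X where "X = {fst z0 - e/2 <..< fst z0 + e/2}"
  define Y where "Y = {snd z0 - e/2 <..< snd z0 + e/2}"
  have in_V: "(x, y) \<in> V" if "x \<in> X" "y \<in> Y" for x y
  proof -
    have "dist z0 (x, y) = norm (fst z0 - x, snd z0 - y)"
      by (cases z0) (simp add: dist_norm)
    also have "\<dots> \<le> norm (fst z0 - x) + norm (snd z0 - y)"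
      by (rule norm_Pair_le)
    also have "\<dots> < e"
      using that by (auto simp: X_def Y_def abs_less_iff)
    finally show ?thesis
      using \<open>ball z0 e \<subseteq> V\<close> by auto
  qed
  have "infinite X" "infinite Y"
    using \<open>0 < e\<close> by (simp_all add: X_def Y_def infinite_Ioo)
  then show ?thesis
  proof (rule bivariate_poly_coeffs_eq_0[OF _ _ _ \<open>i + j \<le> k\<close>])
    fix x y
    assume "x \<in> X" "y \<in> Y"
    then show "(\<Sum>i\<le>k. \<Sum>j\<le>k - i. c i j * x ^ i * y ^ j) = 0"
      using zero[OF in_V] by simp
  qed
qed

datatype mono3 = X0Y0 | X1Y0 | X0Y1 | X2Y0 | X1Y1 | X0Y2 | X3Y0 | X2Y1 | X1Y2 | X0Y3

lemma UNIV_mono3: "(UNIV :: mono3 set) = {X0Y0, X1Y0, X0Y1, X2Y0, X1Y1, X0Y2, X3Y0, X2Y1, X1Y2, X0Y3}"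
  using mono3.exhaust by auto

instance mono3 :: finite
  by standard (simp add: UNIV_mono3)

fun exps :: "mono3 \<Rightarrow> nat \<times> nat" where
  "exps X0Y0 = (0, 0)" | "exps X1Y0 = (1, 0)" | "exps X0Y1 = (0, 1)"
| "exps X2Y0 = (2, 0)" | "exps X1Y1 = (1, 1)" | "exps X0Y2 = (0, 2)"
| "exps X3Y0 = (3, 0)" | "exps X2Y1 = (2, 1)" | "exps X1Y2 = (1, 2)" | "exps X0Y3 = (0, 3)"

lemma inj_exps: "inj exps"
  by (rule injI) (case_tac x; case_tac y; simp)

lemma exps_degree: "fst (exps m) + snd (exps m) \<le> 3"
  by (cases m) simp_all

lemma sum_mono3: "(\<Sum>m\<in>UNIV. f (exps m)) = (\<Sum>i\<le>3. \<Sum>j\<le>3 - i. f (i, j))"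
  by (simp add: UNIV_mono3 numeral_3_eq_3 numeral_2_eq_2 atMost_Suc add_ac)

definition monomials :: "pt \<Rightarrow> real^mono3" where
  "monomials z = (\<chi> m. fst z ^ fst (exps m) * snd z ^ snd (exps m))"

definition cubic :: "real^mono3 \<Rightarrow> pt \<Rightarrow> real" where
  "cubic c z = c \<bullet> monomials z"

lemma cubic_as_sum: "cubic c z = (\<Sum>i\<le>3. \<Sum>j\<le>3 - i. c $ inv exps (i, j) * fst z ^ i * snd z ^ j)"
proof -
  have "cubic c z = (\<Sum>m\<in>UNIV. (\<lambda>(i, j). c $ inv exps (i, j) * fst z ^ i * snd z ^ j) (exps m))"
    by (simp add: cubic_def monomials_def inner_vec_def inv_f_f[OF inj_exps] split_beta mult.assoc)
  then show ?thesis
    by (simp add: sum_mono3)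
qed

lemma poly2_cubic: "poly2 3 (cubic c)"
  unfolding poly2_def cubic_as_sum by (intro exI[of _ "\<lambda>i j. c $ inv exps (i, j)"]) simp

lemma continuous_on_cubic: "continuous_on S (cubic c)"
  by (rule poly2_continuous_on[OF poly2_cubic])

lemma poly2_cubicE:
  assumes "poly2 3 p"
  obtains c where "p = cubic c"
proof -
  obtain d where d: "p = (\<lambda>z. \<Sum>i\<le>3. \<Sum>j\<le>3 - i. d i j * fst z ^ i * snd z ^ j)"
    using assms by (rule poly2E)
  have "cubic (\<chi> m. d (fst (exps m)) (snd (exps m))) z
      = (\<Sum>m\<in>UNIV. (\<lambda>(i, j). d i j * fst z ^ i * snd z ^ j) (exps m))" for z
    by (simp add: cubic_def monomials_def inner_vec_def split_beta mult.assoc)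
  then have "p = cubic (\<chi> m. d (fst (exps m)) (snd (exps m)))"
    by (simp add: d sum_mono3 fun_eq_iff)
  then show ?thesis by (rule that)
qed

lemma cubic_diff: "cubic (c - d) z = cubic c z - cubic d z"
  by (simp add: cubic_def inner_diff_left)

lemma continuous_on_monomials: "continuous_on S (\<lambda>z. monomials z $ m)"
  by (simp add: monomials_def continuous_intros)

lemma cubic_eq_0_on_open_imp_0:
  assumes "open V" "z0 \<in> V" "\<And>z. z \<in> V \<Longrightarrow> cubic c z = 0"
  shows "c = 0"
proof -
  have "c $ inv exps (i, j) = 0" if "i + j \<le> 3" for i j
    using assms that unfolding cubic_as_sum by (rule bivariate_poly_coeffs_eq_0_on_open)
  then have "c $ m = 0" for m
    using exps_degree[of m] inv_f_f[OF inj_exps, of m] by (metis prod.collapse)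
  then show ?thesis
    by (simp add: vec_eq_iff)
qed

lemma Pk_add:
  assumes "f \<in> Pk k S" "g \<in> Pk k S"
  shows "(\<lambda>z. f z + g z) \<in> Pk k S"
proof -
  obtain p q where "poly2 k p" "f = ext0 S p" "poly2 k q" "g = ext0 S q"
    using assms unfolding Pk_def by blast
  moreover have "(\<lambda>z. ext0 S p z + ext0 S q z) = ext0 S (\<lambda>z. p z + q z)"
    by (simp add: ext0_def fun_eq_iff)
  ultimately show ?thesis
    unfolding Pk_def using poly2_add by blast
qed

lemma Pk_scale:
  assumes "f \<in> Pk k S"
  shows "(\<lambda>z. r * f z) \<in> Pk k S"
proof -
  obtain p where "poly2 k p" "f = ext0 S p"
    using assms unfolding Pk_def by blast
  moreover have "(\<lambda>z. r * ext0 S p z) = ext0 S (\<lambda>z. r * p z)"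
    by (simp add: ext0_def fun_eq_iff)
  ultimately show ?thesis
    unfolding Pk_def using poly2_scale by blast
qed

lemma ext0_const_in_Pk: "ext0 S (\<lambda>_. r) \<in> Pk k S"
  unfolding Pk_def using poly2_const by blast

lemma Pk3_iff_ext0_cubic: "f \<in> Pk 3 S \<longleftrightarrow> (\<exists>e. f = ext0 S (cubic e))"
proof
  assume "f \<in> Pk 3 S"
  then obtain p where "poly2 3 p" "f = ext0 S p"
    unfolding Pk_def by blast
  moreover obtain e where "p = cubic e"
    using \<open>poly2 3 p\<close> by (rule poly2_cubicE)
  ultimately show "\<exists>e. f = ext0 S (cubic e)"
    by blast
next
  assume "\<exists>e. f = ext0 S (cubic e)"
  then show "f \<in> Pk 3 S"
    unfolding Pk_def using poly2_cubic by blast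
qed

lemma Pk3_spanned_by_independent:
  fixes f :: "mono3 \<Rightarrow> pt \<Rightarrow> real"
  assumes f: "\<And>k. f k \<in> Pk 3 S"
    and independent: "\<And>w. (\<lambda>z. \<Sum>k\<in>UNIV. w $ k * f k z) = (\<lambda>_. 0) \<Longrightarrow> w = 0"
    and g: "g \<in> Pk 3 S"
  shows "\<exists>w. g = (\<lambda>z. \<Sum>k\<in>UNIV. w $ k * f k z)"
proof -
  obtain e where e: "\<And>k. f k = ext0 S (cubic (e k))"
    using f unfolding Pk3_iff_ext0_cubic by metis
  define L where "L w = (\<Sum>k\<in>UNIV. w $ k *\<^sub>R e k)" for w
  have ext0_L: "ext0 S (cubic (L w)) = (\<lambda>z. \<Sum>k\<in>UNIV. w $ k * f k z)" for w
    by (simp add: fun_eq_iff ext0_def e L_def cubic_def inner_sum_left)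
  have "linear L"
    by (rule linearI) (simp_all add: L_def sum.distrib scaleR_add_left scaleR_sum_right)
  moreover have "inj L"
    unfolding linear_inj_iff_eq_0[OF \<open>linear L\<close>]
  proof (intro allI impI)
    fix w
    assume "L w = 0"
    then have "ext0 S (cubic (L w)) = (\<lambda>_. 0)"
      by (simp add: cubic_def ext0_def fun_eq_iff)
    then show "w = 0"
      using independent ext0_L[of w] by simp
  qed
  ultimately have "surj L"
    by (rule linear_inj_imp_surj)
  obtain e0 where "g = ext0 S (cubic e0)"
    using g unfolding Pk3_iff_ext0_cubic by blast
  moreover obtain w where "e0 = L w"
    using \<open>surj L\<close> by (metis surjD)
  ultimately show ?thesis
    using ext0_L by blast
qed

section \<open>Partial derivatives\<close>

definition partial_x :: "(pt \<Rightarrow> real) \<Rightarrow> pt \<Rightarrow> real" where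
  "partial_x p z = deriv (\<lambda>t. p (t, snd z)) (fst z)"

definition partial_y :: "(pt \<Rightarrow> real) \<Rightarrow> pt \<Rightarrow> real" where
  "partial_y p z = deriv (\<lambda>t. p (fst z, t)) (snd z)"

lemma poly2_partial_x:
  assumes "poly2 k p"
  shows "poly2 (k - 1) (partial_x p)"
    and "((\<lambda>t. p (t, y)) has_real_derivative partial_x p (x, y)) (at x)"
proof -
  obtain c where p: "p = (\<lambda>z. \<Sum>i\<le>k. \<Sum>j\<le>k - i. c i j * fst z ^ i * snd z ^ j)"
    using assms by (rule poly2E)
  define dx where "dx z = (\<Sum>i\<le>k. \<Sum>j\<le>k - i. c i j * (of_nat i * fst z ^ (i - 1)) * snd z ^ j)" for z
  have dx: "((\<lambda>t. p (t, y)) has_real_derivative dx (x, y)) (at x)" for x y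
    unfolding p dx_def by (auto intro!: derivative_eq_intros DERIV_sum)
  then have "partial_x p = dx"
    by (simp add: fun_eq_iff partial_x_def DERIV_imp_deriv)
  moreover have "poly2 (k - 1) dx"
    unfolding dx_def
  proof (intro poly2_sum)
    fix i j assume "i \<in> {..k}" "j \<in> {..k - i}"
    then show "poly2 (k - 1) (\<lambda>z. c i j * (of_nat i * fst z ^ (i - 1)) * snd z ^ j)"
      using poly2_monomial[of "i - 1" j "k - 1" "c i j * of_nat i"]
      by (cases "i = 0") (simp_all add: poly2_const mult_ac)
  qed simp_all
  ultimately show "poly2 (k - 1) (partial_x p)"
    and "((\<lambda>t. p (t, y)) has_real_derivative partial_x p (x, y)) (at x)"
    using dx by simp_all
qed

lemma poly2_partial_y:
  assumes "poly2 k p"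
  shows "poly2 (k - 1) (partial_y p)"
    and "((\<lambda>t. p (x, t)) has_real_derivative partial_y p (x, y)) (at y)"
proof -
  obtain c where p: "p = (\<lambda>z. \<Sum>i\<le>k. \<Sum>j\<le>k - i. c i j * fst z ^ i * snd z ^ j)"
    using assms by (rule poly2E)
  define dy where "dy z = (\<Sum>i\<le>k. \<Sum>j\<le>k - i. c i j * fst z ^ i * (of_nat j * snd z ^ (j - 1)))" for z
  have dy: "((\<lambda>t. p (x, t)) has_real_derivative dy (x, y)) (at y)" for x y
    unfolding p dy_def by (auto intro!: derivative_eq_intros DERIV_sum)
  then have "partial_y p = dy"
    by (simp add: fun_eq_iff partial_y_def DERIV_imp_deriv)
  moreover have "poly2 (k - 1) dy"
    unfolding dy_def
  proof (intro poly2_sum)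
    fix i j assume "i \<in> {..k}" "j \<in> {..k - i}"
    then show "poly2 (k - 1) (\<lambda>z. c i j * fst z ^ i * (of_nat j * snd z ^ (j - 1)))"
      using poly2_monomial[of i "j - 1" "k - 1" "c i j * of_nat j"]
      by (cases "j = 0") (simp_all add: poly2_const mult_ac)
  qed simp_all
  ultimately show "poly2 (k - 1) (partial_y p)"
    and "((\<lambda>t. p (x, t)) has_real_derivative partial_y p (x, y)) (at y)"
    using dy by simp_all
qed

lemma poly2_directional_derivative:
  assumes "poly2 k p"
  shows "((\<lambda>t. p (z + t *\<^sub>R v)) has_real_derivative
    partial_x p z * fst v + partial_y p z * snd v) (at 0)"
proof -
  obtain c where p: "p = (\<lambda>z. \<Sum>i\<le>k. \<Sum>j\<le>k - i. c i j * fst z ^ i * snd z ^ j)"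
    using assms by (rule poly2E)
  have "((\<lambda>t. p (t, snd z)) has_real_derivative
      (\<Sum>i\<le>k. \<Sum>j\<le>k - i. c i j * (of_nat i * fst z ^ (i - 1)) * snd z ^ j)) (at (fst z))"
    unfolding p by (auto intro!: derivative_eq_intros DERIV_sum)
  then have dx: "partial_x p z = (\<Sum>i\<le>k. \<Sum>j\<le>k - i. c i j * (of_nat i * fst z ^ (i - 1)) * snd z ^ j)"
    by (simp add: partial_x_def DERIV_imp_deriv)
  have "((\<lambda>t. p (fst z, t)) has_real_derivative
      (\<Sum>i\<le>k. \<Sum>j\<le>k - i. c i j * fst z ^ i * (of_nat j * snd z ^ (j - 1)))) (at (snd z))"
    unfolding p by (auto intro!: derivative_eq_intros DERIV_sum)
  then have dy: "partial_y p z = (\<Sum>i\<le>k. \<Sum>j\<le>k - i. c i j * fst z ^ i * (of_nat j * snd z ^ (j - 1)))"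
    by (simp add: partial_y_def DERIV_imp_deriv)
  have "((\<lambda>t. p (z + t *\<^sub>R v)) has_real_derivative (\<Sum>i\<le>k. \<Sum>j\<le>k - i.
      c i j * (of_nat i * fst z ^ (i - 1) * fst v) * snd z ^ j
      + c i j * fst z ^ i * (of_nat j * snd z ^ (j - 1) * snd v))) (at 0)"
    unfolding p by (auto intro!: derivative_eq_intros DERIV_sum)
  then show ?thesis
    by (simp add: dx dy sum_distrib_left sum.distrib mult_ac)
qed

lemma derivative_eq_0_if_vanishing_right:
  fixes g :: "real \<Rightarrow> real"
  assumes "(g has_real_derivative D) (at 0)" "\<And>t. 0 \<le> t \<Longrightarrow> t \<le> 1 \<Longrightarrow> g t = 0"
  shows "D = 0"
proof -
  have "((\<lambda>h. (g (0 + h) - g 0) / h) \<longlongrightarrow> D) (at_right 0)"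
    using assms(1) unfolding DERIV_def by (rule filterlim_mono) (simp_all add: at_le)
  moreover have "eventually (\<lambda>h. (g (0 + h) - g 0) / h = 0) (at_right (0::real))"
    unfolding eventually_at_right_field by (rule exI[of _ 1]) (auto simp: assms(2))
  ultimately have "((\<lambda>h. 0) \<longlongrightarrow> D) (at_right (0::real))"
    by (rule Lim_transform_eventually)
  from tendsto_unique[OF trivial_limit_at_right_real this tendsto_const] show ?thesis .
qed

lemma poly2_gradient_orthogonal_to_segment:
  assumes "poly2 k p" "\<forall>z\<in>closed_segment V W. p z = 0"
  shows "partial_x p V * (fst W - fst V) + partial_y p V * (snd W - snd V) = 0"
proof -
  have "partial_x p V * fst (W - V) + partial_y p V * snd (W - V) = 0"
  proof (rule derivative_eq_0_if_vanishing_right[OF poly2_directional_derivative[OF assms(1)]])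
    fix t :: real
    assume "0 \<le> t" "t \<le> 1"
    then have "V + t *\<^sub>R (W - V) \<in> closed_segment V W"
      unfolding in_segment by (intro exI[of _ t]) (simp add: algebra_simps)
    then show "p (V + t *\<^sub>R (W - V)) = 0"
      using assms(2) by blast
  qed
  then show ?thesis by simp
qed

lemma orthogonal_to_independent_pair_eq_0:
  fixes u v d1 d2 e1 e2 :: real
  assumes "u * d1 + v * d2 = 0" "u * e1 + v * e2 = 0" "d1 * e2 - d2 * e1 \<noteq> 0"
  shows "u = 0 \<and> v = 0"
proof -
  have "u * (d1 * e2 - d2 * e1) = e2 * (u * d1 + v * d2) - d2 * (u * e1 + v * e2)"
    by (simp add: algebra_simps)
  then have "u * (d1 * e2 - d2 * e1) = 0" using assms by simp
  moreover have "v * (d1 * e2 - d2 * e1) = d1 * (u * e1 + v * e2) - e1 * (u * d1 + v * d2)"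
    by (simp add: algebra_simps)
  then have "v * (d1 * e2 - d2 * e1) = 0" using assms by simp
  ultimately show ?thesis
    using assms(3) by simp
qed

lemma cross_nonzero_if_not_collinear:
  fixes u v w :: pt
  assumes "\<not> collinear {u, v, w}"
  shows "(fst v - fst u) * (snd w - snd u) - (snd v - snd u) * (fst w - fst u) \<noteq> 0"
proof
  assume cross: "(fst v - fst u) * (snd w - snd u) - (snd v - snd u) * (fst w - fst u) = 0"
  define x where "x = v - u"
  define y where "y = w - u"
  have xy: "fst x * snd y = snd x * fst y"
    using cross by (simp add: x_def y_def algebra_simps)
  have "x = 0 \<or> y = 0 \<or> (\<exists>r. y = r *\<^sub>R x)"
  proof (cases "fst x = 0")
    case True
    then show ?thesis
      using xy by (cases "snd x = 0") (auto simp: prod_eq_iff intro!: exI[of _ "snd y / snd x"])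
  next
    case False
    then show ?thesis
      using xy by (auto simp: prod_eq_iff field_simps intro!: exI[of _ "fst y / fst x"])
  qed
  then have "collinear {0, v - u, w - u}"
    unfolding collinear_lemma x_def y_def .
  then show False
    using assms collinear_3[of v u w] by (simp add: insert_commute)
qed

lemma poly2_gradient_eq_0_at_corner:
  assumes p: "poly2 k p" and "\<not> collinear {V, W1, W2}"
    and "\<forall>z\<in>closed_segment V W1 \<union> closed_segment V W2. p z = 0"
  shows "partial_x p V = 0 \<and> partial_y p V = 0"
proof (rule orthogonal_to_independent_pair_eq_0)
  show "partial_x p V * (fst W1 - fst V) + partial_y p V * (snd W1 - snd V) = 0"
    "partial_x p V * (fst W2 - fst V) + partial_y p V * (snd W2 - snd V) = 0"
    using assms by (auto intro!: poly2_gradient_orthogonal_to_segment)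
qed (rule cross_nonzero_if_not_collinear[OF assms(2)])

section \<open>Integrals over compact convex sets\<close>

lemma integrable_continuous_compact:
  fixes f :: "'a::euclidean_space \<Rightarrow> real"
  assumes "compact S" "continuous_on S f"
  shows "f integrable_on S"
  using set_borel_integral_eq_integral(1) borel_integrable_compact[OF assms]
  unfolding set_integrable_def by blast

lemma lborel_integral_indicator_compact:
  fixes f :: "'a::euclidean_space \<Rightarrow> real"
  assumes "compact S" "continuous_on S f"
  shows "(LINT x|lborel. indicator S x * f x) = integral S f"
  using set_borel_integral_eq_integral(2)[of S f] borel_integrable_compact[OF assms]
  unfolding set_integrable_def set_lebesgue_integral_def by simp

lemma integral_ext0_mult: "integral S (\<lambda>z. ext0 S p z * q z) = integral S (\<lambda>z. p z * q z)"
  by (rule integral_cong) (simp add: ext0_def)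

lemma integral_eq_0_imp_zero_on_interior:
  fixes f :: "'a::euclidean_space \<Rightarrow> real"
  assumes S: "compact S" and f: "continuous_on S f" "\<And>z. z \<in> S \<Longrightarrow> 0 \<le> f z"
    and "integral S f = 0" "z \<in> interior S"
  shows "f z = 0"
proof -
  obtain a b where box: "cbox a b \<subseteq> interior S" "z \<in> box a b"
    using open_contains_cbox[OF open_interior \<open>z \<in> interior S\<close>] by metis
  then have "cbox a b \<subseteq> S" using interior_subset by blast
  then have f_box: "continuous_on (cbox a b) f" using continuous_on_subset[OF f(1)] by blast
  have "integral (cbox a b) f \<le> integral S f"
    using \<open>cbox a b \<subseteq> S\<close> f S
    by (intro integral_subset_le integrable_continuous f_box integrable_continuous_compact) auto
  moreover have "0 \<le> integral (cbox a b) f"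
    using \<open>cbox a b \<subseteq> S\<close> f by (intro integral_nonneg integrable_continuous f_box) auto
  ultimately have "(f has_integral 0) (cbox a b)"
    using \<open>integral S f = 0\<close> integrable_continuous[OF f_box] by (metis antisym has_integral_integral)
  then show ?thesis
    using box \<open>cbox a b \<subseteq> S\<close> f(2) box_subset_cbox[of a b]
    by (intro has_integral_0_cbox_imp_0[OF f_box]) blast+
qed

lemma integral_pos_if_pos_on_interior:
  fixes f :: "'a::euclidean_space \<Rightarrow> real"
  assumes "compact S" "continuous_on S f" "\<And>z. z \<in> S \<Longrightarrow> 0 \<le> f z"
    and "z \<in> interior S" "0 < f z"
  shows "0 < integral S f"
proof -
  have "0 \<le> integral S f"
    using assms by (intro integral_nonneg integrable_continuous_compact) auto
  moreover have "integral S f \<noteq> 0"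
    using integral_eq_0_imp_zero_on_interior[OF assms(1-3) _ assms(4)] assms(5) by auto
  ultimately show ?thesis by simp
qed

lemma compact_x_slice:
  fixes S :: "pt set"
  assumes "compact S"
  shows "compact {x. (x, y) \<in> S}"
proof -
  have "{x. (x, y) \<in> S} = fst ` (S \<inter> {z. snd z = y})" by force
  then show ?thesis
    by (simp only:) (intro compact_continuous_image continuous_intros compact_Int_closed assms closed_Collect_eq)
qed

lemma compact_y_slice:
  fixes S :: "pt set"
  assumes "compact S"
  shows "compact {y. (x, y) \<in> S}"
proof -
  have "{y. (x, y) \<in> S} = snd ` (S \<inter> {z. fst z = x})" by force
  then show ?thesis
    by (simp only:) (intro compact_continuous_image continuous_intros compact_Int_closed assms closed_Collect_eq)
qed

lemma convex_x_slice:
  fixes S :: "pt set"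
  assumes "convex S"
  shows "convex {x. (x, y) \<in> S}"
proof (rule convexI)
  fix x1 x2 u v :: real
  assume "x1 \<in> {x. (x, y) \<in> S}" "x2 \<in> {x. (x, y) \<in> S}" "0 \<le> u" "0 \<le> v" "u + v = 1"
  then have "u *\<^sub>R (x1, y) + v *\<^sub>R (x2, y) \<in> S"
    using convexD[OF assms, of "(x1, y)" "(x2, y)" u v] by simp
  also have "u *\<^sub>R (x1, y) + v *\<^sub>R (x2, y) = (u *\<^sub>R x1 + v *\<^sub>R x2, (u + v) * y)"
    by (simp add: algebra_simps)
  finally show "u *\<^sub>R x1 + v *\<^sub>R x2 \<in> {x. (x, y) \<in> S}"
    using \<open>u + v = 1\<close> by simp
qed

lemma convex_y_slice:
  fixes S :: "pt set"
  assumes "convex S"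
  shows "convex {y. (x, y) \<in> S}"
proof (rule convexI)
  fix y1 y2 u v :: real
  assume "y1 \<in> {y. (x, y) \<in> S}" "y2 \<in> {y. (x, y) \<in> S}" "0 \<le> u" "0 \<le> v" "u + v = 1"
  then have "u *\<^sub>R (x, y1) + v *\<^sub>R (x, y2) \<in> S"
    using convexD[OF assms, of "(x, y1)" "(x, y2)" u v] by simp
  also have "u *\<^sub>R (x, y1) + v *\<^sub>R (x, y2) = ((u + v) * x, u *\<^sub>R y1 + v *\<^sub>R y2)"
    by (simp add: algebra_simps)
  finally show "u *\<^sub>R y1 + v *\<^sub>R y2 \<in> {y. (x, y) \<in> S}"
    using \<open>u + v = 1\<close> by simp
qed

lemma frontier_x_slice:
  fixes S :: "pt set"
  assumes "closed S" "x \<in> frontier {x. (x, y) \<in> S}"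
  shows "(x, y) \<in> frontier S"
proof -
  have "closed ((\<lambda>x. (x, y)) -` S)"
    using assms(1) by (intro continuous_closed_vimage) (auto intro: continuous_intros)
  then have "(x, y) \<in> S"
    using assms(2) frontier_subset_closed by (fastforce simp: vimage_def)
  have "open ((\<lambda>x. (x, y)) -` interior S)"
    by (intro continuous_open_vimage) (auto intro: continuous_intros)
  then have "{x. (x, y) \<in> interior S} \<subseteq> interior {x. (x, y) \<in> S}"
    using interior_subset by (intro interior_maximal) (auto simp: vimage_def)
  then have "(x, y) \<notin> interior S"
    using assms(2) by (auto simp: frontier_def)
  with \<open>(x, y) \<in> S\<close> show ?thesis
    using closure_subset by (auto simp: frontier_def)
qed

lemma frontier_y_slice:
  fixes S :: "pt set"
  assumes "closed S" "y \<in> frontier {y. (x, y) \<in> S}"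
  shows "(x, y) \<in> frontier S"
proof -
  have "closed ((\<lambda>y. (x, y)) -` S)"
    using assms(1) by (intro continuous_closed_vimage) (auto intro: continuous_intros)
  then have "(x, y) \<in> S"
    using assms(2) frontier_subset_closed by (fastforce simp: vimage_def)
  have "open ((\<lambda>y. (x, y)) -` interior S)"
    by (intro continuous_open_vimage) (auto intro: continuous_intros)
  then have "{y. (x, y) \<in> interior S} \<subseteq> interior {y. (x, y) \<in> S}"
    using interior_subset by (intro interior_maximal) (auto simp: vimage_def)
  then have "(x, y) \<notin> interior S"
    using assms(2) by (auto simp: frontier_def)
  with \<open>(x, y) \<in> S\<close> show ?thesis
    using closure_subset by (auto simp: frontier_def)
qed

lemma integral_eq_0_if_integral_x_slices_eq_0:
  fixes f :: "pt \<Rightarrow> real"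
  assumes S: "compact S" and f: "continuous_on UNIV f"
    and slices: "\<And>y. integral {x. (x, y) \<in> S} (\<lambda>x. f (x, y)) = 0"
  shows "integral S f = 0"
proof -
  have "integral S f = (LINT z|(lborel \<Otimes>\<^sub>M lborel). indicator S z * f z)"
    using lborel_integral_indicator_compact[OF S continuous_on_subset[OF f]] by (simp add: lborel_prod)
  also have "\<dots> = (LINT y|lborel. LINT x|lborel. indicator S (x, y) * f (x, y))"
    using lborel_pair.integral_snd[of "\<lambda>x y. indicator S (x, y) * f (x, y)"]
      borel_integrable_compact[OF S continuous_on_subset[OF f]]
    by (simp add: lborel_prod split_beta')
  also have "\<dots> = (LINT y|lborel. integral {x. (x, y) \<in> S} (\<lambda>x. f (x, y)))"
    by (intro Bochner_Integration.integral_cong refl, subst lborel_integral_indicator_compact[symmetric])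
      (auto intro!: compact_x_slice[OF S] continuous_on_compose2[OF f] continuous_intros simp: indicator_def)
  finally show ?thesis by (simp add: slices)
qed

lemma integral_eq_0_if_integral_y_slices_eq_0:
  fixes f :: "pt \<Rightarrow> real"
  assumes S: "compact S" and f: "continuous_on UNIV f"
    and slices: "\<And>x. integral {y. (x, y) \<in> S} (\<lambda>y. f (x, y)) = 0"
  shows "integral S f = 0"
proof -
  have "integral S f = (LINT z|(lborel \<Otimes>\<^sub>M lborel). indicator S z * f z)"
    using lborel_integral_indicator_compact[OF S continuous_on_subset[OF f]] by (simp add: lborel_prod)
  also have "\<dots> = (LINT x|lborel. LINT y|lborel. indicator S (x, y) * f (x, y))"
    using lborel_pair.integral_fst'[of "\<lambda>z. indicator S z * f z"]
      borel_integrable_compact[OF S continuous_on_subset[OF f]]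
    by (simp add: lborel_prod)
  also have "\<dots> = (LINT x|lborel. integral {y. (x, y) \<in> S} (\<lambda>y. f (x, y)))"
    by (intro Bochner_Integration.integral_cong refl, subst lborel_integral_indicator_compact[symmetric])
      (auto intro!: compact_y_slice[OF S] continuous_on_compose2[OF f] continuous_intros simp: indicator_def)
  finally show ?thesis by (simp add: slices)
qed

lemma integral_derivative_eq_0_if_vanishing_on_frontier:
  fixes T :: "real set"
  assumes T: "compact T" "convex T"
    and q: "\<And>x. (q has_real_derivative q' x) (at x)" "continuous_on UNIV q'"
    and boundary: "\<And>x. x \<in> frontier T \<Longrightarrow> q x = 0"
  shows "integral T q' = 0"
proof (cases "T = {}")
  case False
  obtain l r where T_eq: "T = {l..r}"
    using T connected_compact_interval_1 convex_connected by blast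
  with False have "l \<le> r" by simp
  then have "frontier T = {l, r}"
    by (auto simp: T_eq frontier_def closure_closed)
  then have "q l = 0" "q r = 0" using boundary by auto
  have "(q' has_integral q r - q l) {l..r}"
    using \<open>l \<le> r\<close> q(1) by (intro fundamental_theorem_of_calculus)
      (auto simp: has_real_derivative_iff_has_vector_derivative[symmetric] intro: has_field_derivative_at_within)
  then show ?thesis
    using \<open>q l = 0\<close> \<open>q r = 0\<close> by (simp add: T_eq integral_unique)
qed simp

lemma integral_partial_x_eq_0:
  assumes S: "compact S" "convex S" and p: "poly2 k p"
    and boundary: "\<forall>z\<in>frontier S. p z = 0"
  shows "integral S (partial_x p) = 0"
proof (rule integral_eq_0_if_integral_x_slices_eq_0[OF S(1)])
  show cont: "continuous_on UNIV (partial_x p)"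
    using poly2_continuous_on[OF poly2_partial_x(1)[OF p]] .
  fix y
  show "integral {x. (x, y) \<in> S} (\<lambda>x. partial_x p (x, y)) = 0"
  proof (rule integral_derivative_eq_0_if_vanishing_on_frontier)
    show "continuous_on UNIV (\<lambda>x. partial_x p (x, y))"
      by (rule continuous_on_compose2[OF cont]) (auto intro: continuous_intros)
    show "p (x, y) = 0" if "x \<in> frontier {x. (x, y) \<in> S}" for x
      using boundary frontier_x_slice[OF compact_imp_closed[OF S(1)] that] by blast
  qed (use S p poly2_partial_x(2) compact_x_slice convex_x_slice in auto)
qed

lemma integral_partial_y_eq_0:
  assumes S: "compact S" "convex S" and p: "poly2 k p"
    and boundary: "\<forall>z\<in>frontier S. p z = 0"
  shows "integral S (partial_y p) = 0"
proof (rule integral_eq_0_if_integral_y_slices_eq_0[OF S(1)])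
  show cont: "continuous_on UNIV (partial_y p)"
    using poly2_continuous_on[OF poly2_partial_y(1)[OF p]] .
  fix x
  show "integral {y. (x, y) \<in> S} (\<lambda>y. partial_y p (x, y)) = 0"
  proof (rule integral_derivative_eq_0_if_vanishing_on_frontier)
    show "continuous_on UNIV (\<lambda>y. partial_y p (x, y))"
      by (rule continuous_on_compose2[OF cont]) (auto intro: continuous_intros)
    show "p (x, y) = 0" if "y \<in> frontier {y. (x, y) \<in> S}" for y
      using boundary frontier_y_slice[OF compact_imp_closed[OF S(1)] that] by blast
  qed (use S p poly2_partial_y(2) compact_y_slice convex_y_slice in auto)
qed

lemma affine_convex_combination:
  fixes f :: "pt \<Rightarrow> real"
  assumes "\<And>z. f z = \<alpha> + \<beta> * fst z + \<gamma> * snd z" "u + v + w = 1"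
  shows "f (u *\<^sub>R p + v *\<^sub>R q + w *\<^sub>R r) = u * f p + v * f q + w * f r"
proof -
  have "f (u *\<^sub>R p + v *\<^sub>R q + w *\<^sub>R r)
      = (u + v + w) * \<alpha> + \<beta> * (u * fst p + v * fst q + w * fst r) + \<gamma> * (u * snd p + v * snd q + w * snd r)"
    using assms by simp
  also have "\<dots> = u * f p + v * f q + w * f r"
    by (simp add: assms(1) algebra_simps)
  finally show ?thesis .
qed

lemma affine_eq_0_at_ends_if_eq_0_at_thirds:
  fixes f :: "pt \<Rightarrow> real"
  assumes f: "\<And>z. f z = \<alpha> + \<beta> * fst z + \<gamma> * snd z"
    and "f ((1/3) *\<^sub>R P + (2/3) *\<^sub>R Q) = 0" "f ((2/3) *\<^sub>R P + (1/3) *\<^sub>R Q) = 0"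
  shows "f P = 0 \<and> f Q = 0"
proof -
  have "(1/3) * f P + (2/3) * f Q = 0" "(2/3) * f P + (1/3) * f Q = 0"
    using affine_convex_combination[OF f, of "1/3" "2/3" 0 P Q P]
      affine_convex_combination[OF f, of "2/3" "1/3" 0 P Q P] assms(2,3) by simp_all
  then show ?thesis by linarith
qed

definition affine_field :: "real \<Rightarrow> real \<Rightarrow> real \<Rightarrow> real \<Rightarrow> real \<Rightarrow> real \<Rightarrow> pt \<Rightarrow> pt" where
  "affine_field m1 m2 m3 m4 m5 m6 z = (m1 + m2 * fst z + m3 * snd z, m4 + m5 * fst z + m6 * snd z)"

lemma affine_field_inner:
  "affine_field m1 m2 m3 m4 m5 m6 z \<bullet> g = (m1 * fst g + m4 * snd g) + (m2 * fst g + m5 * snd g) * fst z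
    + (m3 * fst g + m6 * snd g) * snd z"
  by (simp add: affine_field_def inner_prod_def algebra_simps)

section \<open>The triangle\<close>

locale triangle =
  fixes a b c :: pt
  assumes not_collinear: "\<not> collinear {a, b, c}"
begin

definition area2 :: real where
  "area2 = (fst b - fst a) * (snd c - snd a) - (snd b - snd a) * (fst c - fst a)"

lemma area2_nonzero: "area2 \<noteq> 0"
  unfolding area2_def by (rule cross_nonzero_if_not_collinear[OF not_collinear])

definition bary_a :: "pt \<Rightarrow> real" where
  "bary_a z = ((fst b - fst z) * (snd c - snd z) - (snd b - snd z) * (fst c - fst z)) / area2"

definition bary_b :: "pt \<Rightarrow> real" where
  "bary_b z = ((fst c - fst z) * (snd a - snd z) - (snd c - snd z) * (fst a - fst z)) / area2"

definition bary_c :: "pt \<Rightarrow> real" where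
  "bary_c z = ((fst a - fst z) * (snd b - snd z) - (snd a - snd z) * (fst b - fst z)) / area2"

definition grad_a :: pt where
  "grad_a = ((snd b - snd c) / area2, (fst c - fst b) / area2)"

definition grad_b :: pt where
  "grad_b = ((snd c - snd a) / area2, (fst a - fst c) / area2)"

definition grad_c :: pt where
  "grad_c = ((snd a - snd b) / area2, (fst b - fst a) / area2)"

lemma bary_affine:
  "bary_a z = 1 + fst grad_a * (fst z - fst a) + snd grad_a * (snd z - snd a)"
  "bary_b z = 1 + fst grad_b * (fst z - fst b) + snd grad_b * (snd z - snd b)"
  "bary_c z = 1 + fst grad_c * (fst z - fst c) + snd grad_c * (snd z - snd c)"
  using area2_nonzero
  by (simp_all add: bary_a_def bary_b_def bary_c_def grad_a_def grad_b_def grad_c_def field_simps)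
    (simp_all add: area2_def algebra_simps)

lemma bary_affine_form:
  "bary_a z = (1 - fst grad_a * fst a - snd grad_a * snd a) + fst grad_a * fst z + snd grad_a * snd z"
  "bary_b z = (1 - fst grad_b * fst b - snd grad_b * snd b) + fst grad_b * fst z + snd grad_b * snd z"
  "bary_c z = (1 - fst grad_c * fst c - snd grad_c * snd c) + fst grad_c * fst z + snd grad_c * snd z"
  by (simp_all add: bary_affine algebra_simps)

lemma grad_sum: "grad_a + grad_b + grad_c = 0"
  using area2_nonzero by (simp add: grad_a_def grad_b_def grad_c_def prod_eq_iff field_simps)

lemma grad_independent: "fst grad_a * snd grad_b - snd grad_a * fst grad_b \<noteq> 0"
proof -
  have "(fst grad_a * snd grad_b - snd grad_a * fst grad_b) * (area2 * area2)
      = (snd b - snd c) * (fst a - fst c) - (fst c - fst b) * (snd c - snd a)"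
    using area2_nonzero by (simp add: grad_a_def grad_b_def field_simps)
  also have "\<dots> = area2"
    by (simp add: area2_def algebra_simps)
  finally show ?thesis
    using area2_nonzero by auto
qed

lemma bary_sum: "bary_a z + bary_b z + bary_c z = 1"
  using area2_nonzero
  by (simp add: bary_a_def bary_b_def bary_c_def field_simps) (simp add: area2_def algebra_simps)

lemma bary_vertices:
  "bary_a a = 1" "bary_a b = 0" "bary_a c = 0"
  "bary_b a = 0" "bary_b b = 1" "bary_b c = 0"
  "bary_c a = 0" "bary_c b = 0" "bary_c c = 1"
  using area2_nonzero by (simp_all add: bary_a_def bary_b_def bary_c_def) (simp_all add: area2_def algebra_simps)

lemma bary_combination:
  assumes "u + v + w = 1"
  shows "bary_a (u *\<^sub>R a + v *\<^sub>R b + w *\<^sub>R c) = u"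
    "bary_b (u *\<^sub>R a + v *\<^sub>R b + w *\<^sub>R c) = v"
    "bary_c (u *\<^sub>R a + v *\<^sub>R b + w *\<^sub>R c) = w"
  using affine_convex_combination[OF bary_affine_form(1) assms]
    affine_convex_combination[OF bary_affine_form(2) assms]
    affine_convex_combination[OF bary_affine_form(3) assms]
  by (simp_all add: bary_vertices)

lemma bary_reconstruct: "z = bary_a z *\<^sub>R a + bary_b z *\<^sub>R b + bary_c z *\<^sub>R c"
  using area2_nonzero
  by (simp add: prod_eq_iff bary_a_def bary_b_def bary_c_def field_simps) (simp add: area2_def algebra_simps)

lemma affine_eq_0_if_eq_0_at_vertices:
  fixes f :: "pt \<Rightarrow> real"
  assumes "\<And>z. f z = \<alpha> + \<beta> * fst z + \<gamma> * snd z" "f a = 0" "f b = 0" "f c = 0"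
  shows "f z = 0"
proof -
  have "f z = f (bary_a z *\<^sub>R a + bary_b z *\<^sub>R b + bary_c z *\<^sub>R c)"
    by (rule arg_cong[OF bary_reconstruct])
  then show ?thesis
    using affine_convex_combination[OF assms(1) bary_sum[of z], of a b c] assms(2-4) by simp
qed

lemma poly2_bary: "poly2 (Suc k) bary_a" "poly2 (Suc k) bary_b" "poly2 (Suc k) bary_c"
  by (subst bary_affine_form[abs_def], rule poly2_affine)+

definition K :: "pt set" where
  "K = convex hull {a, b, c}"

lemma compact_K: "compact K"
  unfolding K_def by (rule compact_convex_hull) simp

lemma convex_K: "convex K"
  unfolding K_def by simp

lemma K_eq: "K = {z. 0 \<le> bary_a z \<and> 0 \<le> bary_b z \<and> 0 \<le> bary_c z}"
proof
  show "K \<subseteq> {z. 0 \<le> bary_a z \<and> 0 \<le> bary_b z \<and> 0 \<le> bary_c z}"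
    unfolding K_def convex_hull_3 using bary_combination by auto
  show "{z. 0 \<le> bary_a z \<and> 0 \<le> bary_b z \<and> 0 \<le> bary_c z} \<subseteq> K"
    unfolding K_def convex_hull_3 using bary_reconstruct bary_sum by blast
qed

lemma frontier_K: "frontier K = closed_segment a b \<union> closed_segment b c \<union> closed_segment c a"
  unfolding K_def by (rule frontier_of_triangle) simp

lemma bary_eq_0_on_frontier:
  assumes "z \<in> frontier K"
  shows "bary_a z = 0 \<or> bary_b z = 0 \<or> bary_c z = 0"
proof -
  have "bary_c ((1 - u) *\<^sub>R a + u *\<^sub>R b) = 0" "bary_a ((1 - u) *\<^sub>R b + u *\<^sub>R c) = 0"
    "bary_b ((1 - u) *\<^sub>R c + u *\<^sub>R a) = 0" for u
    using bary_combination[of "1 - u" u 0] bary_combination[of 0 "1 - u" u]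
      bary_combination[of u 0 "1 - u"] by (simp_all add: add.commute)
  then show ?thesis
    using assms unfolding frontier_K closed_segment_def by auto
qed

lemma centroid_in_interior: "(1/3) *\<^sub>R a + (1/3) *\<^sub>R b + (1/3) *\<^sub>R c \<in> interior K"
proof -
  let ?g = "(1/3) *\<^sub>R a + (1/3) *\<^sub>R b + (1/3) *\<^sub>R c"
  have bary_g: "bary_a ?g = 1/3" "bary_b ?g = 1/3" "bary_c ?g = 1/3"
    using bary_combination[of "1/3" "1/3" "1/3"] by simp_all
  then have "?g \<in> K"
    by (simp add: K_eq)
  moreover have "?g \<notin> frontier K"
    using bary_eq_0_on_frontier[of ?g] bary_g by auto
  ultimately show ?thesis
    using closure_subset by (auto simp: frontier_def)
qed

lemma closure_interior_K: "closure (interior K) = K"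
  using convex_closure_interior[OF convex_K] centroid_in_interior
    closure_closed[OF compact_imp_closed[OF compact_K]] by auto

lemma measure_K_pos: "0 < measure lebesgue K"
proof -
  have "0 < integral K (\<lambda>z. 1 :: real)"
    using centroid_in_interior by (intro integral_pos_if_pos_on_interior[OF compact_K]) auto
  then show ?thesis
    using lmeasure_integral[OF lmeasurable_compact[OF compact_K]] by simp
qed

lemma square_integral_eq_0_imp_zero:
  fixes p :: "pt \<Rightarrow> real"
  assumes "continuous_on UNIV p" "integral K (\<lambda>z. p z * p z) = 0" "z \<in> K"
  shows "p z = 0"
proof -
  have "interior K \<subseteq> {w. p w = 0}"
  proof
    fix w assume "w \<in> interior K"
    then have "p w * p w = 0"
      using assms(1,2) by (intro integral_eq_0_imp_zero_on_interior[OF compact_K, of "\<lambda>z. p z * p z"])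
        (auto intro: continuous_on_mult continuous_on_subset)
    then show "w \<in> {w. p w = 0}" by simp
  qed
  moreover have "closed {w. p w = 0}"
    using assms(1) by (intro closed_Collect_eq) auto
  ultimately have "K \<subseteq> {w. p w = 0}"
    using closure_minimal closure_interior_K by metis
  then show ?thesis
    using assms(3) by auto
qed

definition bubble :: "pt \<Rightarrow> real" where
  "bubble z = bary_a z * bary_b z * bary_c z"

lemma poly2_bubble: "poly2 3 bubble"
  using poly2_mult[OF poly2_mult[OF poly2_bary(1) poly2_bary(2)] poly2_bary(3), of 0 0 0]
  by (simp add: bubble_def[abs_def] numeral_3_eq_3)

lemma bubble_nonneg: "z \<in> K \<Longrightarrow> 0 \<le> bubble z"
  by (simp add: bubble_def K_eq)

lemma bubble_frontier: "z \<in> frontier K \<Longrightarrow> bubble z = 0"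
  using bary_eq_0_on_frontier by (auto simp: bubble_def)

lemma bubble_vertices: "bubble a = 0" "bubble b = 0" "bubble c = 0"
  by (simp_all add: bubble_def bary_vertices)

lemma integral_bubble_pos: "0 < integral K bubble"
proof (rule integral_pos_if_pos_on_interior[OF compact_K _ bubble_nonneg centroid_in_interior])
  show "continuous_on K bubble"
    by (rule poly2_continuous_on[OF poly2_bubble])
  show "0 < bubble ((1/3) *\<^sub>R a + (1/3) *\<^sub>R b + (1/3) *\<^sub>R c)"
    using bary_combination[of "1/3" "1/3" "1/3"] by (simp add: bubble_def)
qed

lemma poly2_gradient_eq_0_at_vertices:
  assumes p: "poly2 k p" and "\<forall>z\<in>frontier K. p z = 0" "V \<in> {a, b, c}"
  shows "partial_x p V = 0 \<and> partial_y p V = 0"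
proof -
  have edges: "\<forall>z\<in>closed_segment a b \<union> closed_segment b c \<union> closed_segment c a. p z = 0"
    using assms(2) by (simp add: frontier_K)
  have "\<not> collinear {b, c, a}" "\<not> collinear {c, a, b}"
    using not_collinear by (simp_all add: insert_commute)
  have "partial_x p a = 0 \<and> partial_y p a = 0"
    by (rule poly2_gradient_eq_0_at_corner[OF p not_collinear])
      (use edges in \<open>auto simp: closed_segment_commute\<close>)
  moreover have "partial_x p b = 0 \<and> partial_y p b = 0"
    by (rule poly2_gradient_eq_0_at_corner[OF p \<open>\<not> collinear {b, c, a}\<close>])
      (use edges in \<open>auto simp: closed_segment_commute\<close>)
  moreover have "partial_x p c = 0 \<and> partial_y p c = 0"
    by (rule poly2_gradient_eq_0_at_corner[OF p \<open>\<not> collinear {c, a, b}\<close>])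
      (use edges in \<open>auto simp: closed_segment_commute\<close>)
  ultimately show ?thesis
    using assms(3) by auto
qed

section \<open>Sting functions\<close>

definition gram :: "real^mono3 \<Rightarrow> real^mono3" where
  "gram e = (\<chi> m. integral K (\<lambda>z. cubic e z * monomials z $ m))"

lemma integrable_cubic_mult: "(\<lambda>z. cubic e z * f z) integrable_on K" if "continuous_on K f"
  using that by (intro integrable_continuous_compact[OF compact_K] continuous_on_mult continuous_on_cubic)

lemma linear_gram: "linear gram"
proof (rule linearI)
  note cont = continuous_on_monomials
  show "gram (x + y) = gram x + gram y" for x y
    using integral_add[OF integrable_cubic_mult[OF cont] integrable_cubic_mult[OF cont]]
    by (simp add: gram_def vec_eq_iff cubic_def inner_add_left distrib_right)
  show "gram (r *\<^sub>R x) = r *\<^sub>R gram x" for r x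
    by (simp add: gram_def vec_eq_iff cubic_def mult.assoc)
qed

lemma inner_gram: "d \<bullet> gram e = integral K (\<lambda>z. cubic e z * cubic d z)"
proof -
  have "d \<bullet> gram e = (\<Sum>m\<in>UNIV. integral K (\<lambda>z. cubic e z * (d $ m * monomials z $ m)))"
    by (simp add: gram_def inner_vec_def mult_ac)
  also have "\<dots> = integral K (\<lambda>z. \<Sum>m\<in>UNIV. cubic e z * (d $ m * monomials z $ m))"
    by (rule integral_sum[symmetric])
      (auto intro!: integrable_cubic_mult continuous_on_mult continuous_on_const continuous_on_monomials)
  also have "\<dots> = integral K (\<lambda>z. cubic e z * cubic d z)"
    by (simp add: cubic_def[of d] inner_vec_def sum_distrib_left)
  finally show ?thesis .
qed

lemma inj_gram: "inj gram"
  unfolding linear_inj_iff_eq_0[OF linear_gram]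
proof (intro allI impI)
  fix e
  assume "gram e = 0"
  then have "integral K (\<lambda>z. cubic e z * cubic e z) = 0"
    using inner_gram[of e e] by simp
  then have "cubic e z = 0" if "z \<in> interior K" for z
    using square_integral_eq_0_imp_zero[OF continuous_on_cubic] that interior_subset by blast
  then show "e = 0"
    using cubic_eq_0_on_open_imp_0[OF open_interior centroid_in_interior] by blast
qed

lemma cubic_eq_on_K_if_moments_eq:
  assumes "\<And>d. integral K (\<lambda>z. p z * cubic d z) = integral K (\<lambda>z. p' z * cubic d z)"
    and "poly2 3 p" "poly2 3 p'" "z \<in> K"
  shows "p z = p' z"
proof -
  obtain e e' where "p = cubic e" "p' = cubic e'"
    using assms(2,3) by (metis poly2_cubicE)
  then have "integral K (\<lambda>z. cubic e z * cubic (e - e') z) - integral K (\<lambda>z. cubic e' z * cubic (e - e') z) = 0"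
    using assms(1) by simp
  moreover have "(\<lambda>z. cubic e z * cubic (e - e') z) integrable_on K"
    "(\<lambda>z. cubic e' z * cubic (e - e') z) integrable_on K"
    by (intro integrable_cubic_mult continuous_on_cubic)+
  moreover have "(\<lambda>z. cubic (e - e') z * cubic (e - e') z)
      = (\<lambda>z. cubic e z * cubic (e - e') z - cubic e' z * cubic (e - e') z)"
    by (simp only: cubic_diff left_diff_distrib)
  ultimately have "integral K (\<lambda>z. cubic (e - e') z * cubic (e - e') z) = 0"
    by (simp add: integral_diff)
  then have "cubic (e - e') z = 0"
    using square_integral_eq_0_imp_zero[OF continuous_on_cubic _ assms(4)] by blast
  then show ?thesis
    using \<open>p = cubic e\<close> \<open>p' = cubic e'\<close> by (simp add: cubic_def inner_diff_left)
qed

lemma ex1_sting: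
  "\<exists>!s. s \<in> Pk 3 K \<and>
     (\<forall>q. poly2 3 q \<longrightarrow> integral K (\<lambda>z. s z * q z) = measure lebesgue K / 100 * q V)"
proof (rule ex_ex1I)
  obtain \<sigma> where \<sigma>: "gram \<sigma> = (measure lebesgue K / 100) *\<^sub>R monomials V"
    using linear_inj_imp_surj[OF linear_gram inj_gram] by (metis surjD)
  have "integral K (\<lambda>z. ext0 K (cubic \<sigma>) z * q z) = measure lebesgue K / 100 * q V" if "poly2 3 q" for q
  proof -
    obtain d where "q = cubic d"
      using \<open>poly2 3 q\<close> by (rule poly2_cubicE)
    then show ?thesis
      using inner_gram[of d \<sigma>] by (simp add: integral_ext0_mult \<sigma> cubic_def[of d V])
  qed
  then show "\<exists>s. s \<in> Pk 3 K \<and>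
      (\<forall>q. poly2 3 q \<longrightarrow> integral K (\<lambda>z. s z * q z) = measure lebesgue K / 100 * q V)"
    using poly2_cubic unfolding Pk_def by blast
next
  fix s s'
  assume s: "s \<in> Pk 3 K \<and> (\<forall>q. poly2 3 q \<longrightarrow> integral K (\<lambda>z. s z * q z) = measure lebesgue K / 100 * q V)"
    and s': "s' \<in> Pk 3 K \<and> (\<forall>q. poly2 3 q \<longrightarrow> integral K (\<lambda>z. s' z * q z) = measure lebesgue K / 100 * q V)"
  obtain p p' where p: "poly2 3 p" "s = ext0 K p" and p': "poly2 3 p'" "s' = ext0 K p'"
    using s s' unfolding Pk_def by blast
  have "integral K (\<lambda>z. p z * cubic d z) = measure lebesgue K / 100 * cubic d V"
    "integral K (\<lambda>z. p' z * cubic d z) = measure lebesgue K / 100 * cubic d V" for d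
    using s[THEN conjunct2, rule_format, OF poly2_cubic] s'[THEN conjunct2, rule_format, OF poly2_cubic]
    by (simp_all add: p(2) p'(2) integral_ext0_mult)
  then have "p z = p' z" if "z \<in> K" for z
    by (intro cubic_eq_on_K_if_moments_eq[OF _ p(1) p'(1) that]) (simp only:)
  then show "s = s'"
    by (simp add: p(2) p'(2) ext0_def fun_eq_iff)
qed

lemma sting_in_Pk: "sting V K \<in> Pk 3 K"
  and integral_sting_mult:
    "poly2 3 q \<Longrightarrow> integral K (\<lambda>z. sting V K z * q z) = measure lebesgue K / 100 * q V"
  using theI'[OF ex1_sting[of V]] unfolding sting_def[symmetric] by auto

section \<open>The space N(K)\<close>

lemma NspaceE:
  assumes "n \<in> Nspace K"
  obtains q where "poly2 3 q" "n = ext0 K q" "q a = 0" "q b = 0" "q c = 0" "integral K q = 0"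
proof -
  obtain p1 p2 where p: "poly2 4 p1" "poly2 4 p2" and fr: "\<forall>z\<in>frontier K. p1 z = 0" "\<forall>z\<in>frontier K. p2 z = 0"
    and n: "n = ext0 K (\<lambda>z. partial_x p1 z + partial_y p2 z)"
    using assms unfolding Nspace_def partial_x_def partial_y_def by blast
  let ?q = "\<lambda>z. partial_x p1 z + partial_y p2 z"
  have "poly2 3 ?q"
    using poly2_add[OF poly2_partial_x(1)[OF p(1)] poly2_partial_y(1)[OF p(2)]] by simp
  moreover have "?q V = 0" if "V \<in> {a, b, c}" for V
    using poly2_gradient_eq_0_at_vertices[OF p(1) fr(1) that]
      poly2_gradient_eq_0_at_vertices[OF p(2) fr(2) that] by simp
  moreover have "integral K ?q = integral K (partial_x p1) + integral K (partial_y p2)"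
    using poly2_partial_x(1)[OF p(1)] poly2_partial_y(1)[OF p(2)]
    by (intro integral_add integrable_continuous_compact[OF compact_K] poly2_continuous_on)
  then have "integral K ?q = 0"
    using integral_partial_x_eq_0[OF compact_K convex_K p(1) fr(1)]
      integral_partial_y_eq_0[OF compact_K convex_K p(2) fr(2)] by simp
  ultimately show ?thesis
    using that n by blast
qed

definition bubble_div :: "real \<Rightarrow> real \<Rightarrow> real \<Rightarrow> real \<Rightarrow> real \<Rightarrow> real \<Rightarrow> pt \<Rightarrow> real" where
  "bubble_div m1 m2 m3 m4 m5 m6 z =
     partial_x (\<lambda>z. bubble z * fst (affine_field m1 m2 m3 m4 m5 m6 z)) z
     + partial_y (\<lambda>z. bubble z * snd (affine_field m1 m2 m3 m4 m5 m6 z)) z"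

lemma partial_x_bubble_affine:
  "partial_x (\<lambda>z. bubble z * (m1 + m2 * fst z + m3 * snd z)) z
    = (fst grad_a * bary_b z * bary_c z + bary_a z * fst grad_b * bary_c z + bary_a z * bary_b z * fst grad_c)
      * (m1 + m2 * fst z + m3 * snd z) + bubble z * m2"
proof -
  have "((\<lambda>t. bubble (t, snd z) * (m1 + m2 * t + m3 * snd z)) has_real_derivative
      (fst grad_a * bary_b z * bary_c z + bary_a z * fst grad_b * bary_c z + bary_a z * bary_b z * fst grad_c)
      * (m1 + m2 * fst z + m3 * snd z) + bubble z * m2) (at (fst z))"
    unfolding bubble_def bary_affine
    by (rule derivative_eq_intros refl | simp)+ (simp add: algebra_simps)
  then show ?thesis
    unfolding partial_x_def by (simp add: DERIV_imp_deriv)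
qed

lemma partial_y_bubble_affine:
  "partial_y (\<lambda>z. bubble z * (m4 + m5 * fst z + m6 * snd z)) z
    = (snd grad_a * bary_b z * bary_c z + bary_a z * snd grad_b * bary_c z + bary_a z * bary_b z * snd grad_c)
      * (m4 + m5 * fst z + m6 * snd z) + bubble z * m6"
proof -
  have "((\<lambda>t. bubble (fst z, t) * (m4 + m5 * fst z + m6 * t)) has_real_derivative
      (snd grad_a * bary_b z * bary_c z + bary_a z * snd grad_b * bary_c z + bary_a z * bary_b z * snd grad_c)
      * (m4 + m5 * fst z + m6 * snd z) + bubble z * m6) (at (snd z))"
    unfolding bubble_def bary_affine
    by (rule derivative_eq_intros refl | simp)+ (simp add: algebra_simps)
  then show ?thesis
    unfolding partial_y_def by (simp add: DERIV_imp_deriv)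
qed

lemma bubble_div_eq:
  "bubble_div m1 m2 m3 m4 m5 m6 z =
      (affine_field m1 m2 m3 m4 m5 m6 z \<bullet> grad_a) * bary_b z * bary_c z
    + (affine_field m1 m2 m3 m4 m5 m6 z \<bullet> grad_b) * bary_a z * bary_c z
    + (affine_field m1 m2 m3 m4 m5 m6 z \<bullet> grad_c) * bary_a z * bary_b z
    + bubble z * (m2 + m6)"
  unfolding bubble_div_def affine_field_def fst_conv snd_conv partial_x_bubble_affine partial_y_bubble_affine
  by (simp add: inner_prod_def bubble_def algebra_simps)

lemma bubble_div_linear:
  "bubble_div m1 m2 m3 m4 m5 m6 z =
      m1 * bubble_div 1 0 0 0 0 0 z + m2 * bubble_div 0 1 0 0 0 0 z + m3 * bubble_div 0 0 1 0 0 0 z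
    + m4 * bubble_div 0 0 0 1 0 0 z + m5 * bubble_div 0 0 0 0 1 0 z + m6 * bubble_div 0 0 0 0 0 1 z"
  by (simp only: bubble_div_eq) (simp add: affine_field_inner algebra_simps)

lemma bubble_div_in_Nspace: "ext0 K (bubble_div m1 m2 m3 m4 m5 m6) \<in> Nspace K"
proof -
  let ?p1 = "\<lambda>z. bubble z * fst (affine_field m1 m2 m3 m4 m5 m6 z)"
  let ?p2 = "\<lambda>z. bubble z * snd (affine_field m1 m2 m3 m4 m5 m6 z)"
  have "poly2 4 ?p1" "poly2 4 ?p2"
    using poly2_mult[OF poly2_bubble poly2_affine[of 0]] by (simp_all add: affine_field_def)
  then show ?thesis
    unfolding Nspace_def using bubble_frontier
    by (intro CollectI exI[of _ ?p1] exI[of _ ?p2] conjI)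
      (simp_all add: bubble_div_def[abs_def] partial_x_def partial_y_def)
qed

lemma poly2_bubble_div: "poly2 3 (bubble_div m1 m2 m3 m4 m5 m6)"
proof -
  have "poly2 4 (\<lambda>z. bubble z * fst (affine_field m1 m2 m3 m4 m5 m6 z))"
    "poly2 4 (\<lambda>z. bubble z * snd (affine_field m1 m2 m3 m4 m5 m6 z))"
    using poly2_mult[OF poly2_bubble poly2_affine[of 0]] by (simp_all add: affine_field_def)
  then show ?thesis
    unfolding bubble_div_def[abs_def]
    using poly2_add[OF poly2_partial_x(1) poly2_partial_y(1)] by fastforce
qed

lemma zero_in_Nspace: "(\<lambda>_. 0) \<in> Nspace K"
proof -
  have "ext0 K (bubble_div 0 0 0 0 0 0) = (\<lambda>_. 0)"
    by (simp add: fun_eq_iff ext0_def bubble_div_eq affine_field_def inner_prod_def)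
  then show ?thesis
    using bubble_div_in_Nspace[of 0 0 0 0 0 0] by simp
qed

(* On the edge opposite a vertex V, the divergence of bubble * l is (l \<bullet> grad_V) times the
   product of the other two barycentric coordinates, so the affine function l \<bullet> grad_V vanishes
   at two points of that edge and hence at its endpoints. As the three gradients sum to zero,
   l \<bullet> grad_a and l \<bullet> grad_b vanish at all three vertices, hence everywhere. *)
lemma bubble_div_eq_0_imp_inner_grad_eq_0:
  assumes zero: "\<forall>z\<in>K. bubble_div m1 m2 m3 m4 m5 m6 z = 0"
  shows "affine_field m1 m2 m3 m4 m5 m6 z \<bullet> grad_a = 0" "affine_field m1 m2 m3 m4 m5 m6 z \<bullet> grad_b = 0"
proof -
  let ?l = "affine_field m1 m2 m3 m4 m5 m6"
  have on_edges: "(?l p \<bullet> grad_a) * v * w + (?l p \<bullet> grad_b) * u * w + (?l p \<bullet> grad_c) * u * v = 0"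
    if "0 \<le> u" "0 \<le> v" "0 \<le> w" "u + v + w = 1" "u * v * w = 0"
      and p: "p = u *\<^sub>R a + v *\<^sub>R b + w *\<^sub>R c" for u v w p
  proof -
    have bary_p: "bary_a p = u" "bary_b p = v" "bary_c p = w"
      using bary_combination[OF that(4)] p by simp_all
    then have "p \<in> K"
      using that by (simp add: K_eq)
    then have "bubble_div m1 m2 m3 m4 m5 m6 p = 0"
      using zero by blast
    moreover have "bubble p = 0"
      using bary_p that(5) by (simp add: bubble_def)
    ultimately show ?thesis
      by (simp add: bubble_div_eq bary_p algebra_simps)
  qed
  have "?l ((1/3) *\<^sub>R b + (2/3) *\<^sub>R c) \<bullet> grad_a = 0" "?l ((2/3) *\<^sub>R b + (1/3) *\<^sub>R c) \<bullet> grad_a = 0"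
    "?l ((1/3) *\<^sub>R a + (2/3) *\<^sub>R c) \<bullet> grad_b = 0" "?l ((2/3) *\<^sub>R a + (1/3) *\<^sub>R c) \<bullet> grad_b = 0"
    "?l ((1/3) *\<^sub>R a + (2/3) *\<^sub>R b) \<bullet> grad_c = 0" "?l ((2/3) *\<^sub>R a + (1/3) *\<^sub>R b) \<bullet> grad_c = 0"
    using on_edges[of 0 "1/3" "2/3"] on_edges[of 0 "2/3" "1/3"] on_edges[of "1/3" 0 "2/3"]
      on_edges[of "2/3" 0 "1/3"] on_edges[of "1/3" "2/3" 0] on_edges[of "2/3" "1/3" 0]
    by simp_all
  then have edges: "?l b \<bullet> grad_a = 0" "?l c \<bullet> grad_a = 0" "?l a \<bullet> grad_b = 0"
    "?l c \<bullet> grad_b = 0" "?l a \<bullet> grad_c = 0" "?l b \<bullet> grad_c = 0"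
    using affine_eq_0_at_ends_if_eq_0_at_thirds[OF affine_field_inner] by blast+
  have "?l V \<bullet> grad_a + ?l V \<bullet> grad_b + ?l V \<bullet> grad_c = 0" for V
    using grad_sum by (simp flip: inner_add_right)
  then have "?l a \<bullet> grad_a = 0" "?l b \<bullet> grad_b = 0"
    using edges by (metis add_0 add_0_right)+
  with edges show "?l z \<bullet> grad_a = 0" "?l z \<bullet> grad_b = 0"
    by (auto intro: affine_eq_0_if_eq_0_at_vertices[OF affine_field_inner])
qed

lemma bubble_div_eq_0_imp_coeffs_0:
  assumes "\<forall>z\<in>K. bubble_div m1 m2 m3 m4 m5 m6 z = 0"
  shows "m1 = 0 \<and> m2 = 0 \<and> m3 = 0 \<and> m4 = 0 \<and> m5 = 0 \<and> m6 = 0"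
proof -
  have "fst (affine_field m1 m2 m3 m4 m5 m6 z) = 0 \<and> snd (affine_field m1 m2 m3 m4 m5 m6 z) = 0" for z
    using bubble_div_eq_0_imp_inner_grad_eq_0[OF assms, of z] grad_independent
    by (intro orthogonal_to_independent_pair_eq_0) (simp_all add: inner_prod_def)
  from this[of 0] this[of "(1, 0)"] this[of "(0, 1)"] show ?thesis
    by (simp add: affine_field_def)
qed

definition sting_comb :: "real \<Rightarrow> real \<Rightarrow> real \<Rightarrow> real \<Rightarrow> pt \<Rightarrow> real" where
  "sting_comb \<alpha> \<beta> \<gamma> t z = \<alpha> * sting a K z + \<beta> * sting b K z + \<gamma> * sting c K z + t * ext0 K (\<lambda>_. 1) z"

lemma fsum_Sspace_ConstSpan:
  "g \<in> fsum (Sspace a b c) (ConstSpan K) \<longleftrightarrow> (\<exists>\<alpha> \<beta> \<gamma> t. g = sting_comb \<alpha> \<beta> \<gamma> t)"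
proof
  assume "g \<in> fsum (Sspace a b c) (ConstSpan K)"
  then show "\<exists>\<alpha> \<beta> \<gamma> t. g = sting_comb \<alpha> \<beta> \<gamma> t"
    unfolding fsum_def Sspace_def ConstSpan_def Let_def K_def[symmetric]
    by (auto simp: sting_comb_def[abs_def])
next
  assume "\<exists>\<alpha> \<beta> \<gamma> t. g = sting_comb \<alpha> \<beta> \<gamma> t"
  then obtain \<alpha> \<beta> \<gamma> t where "g = sting_comb \<alpha> \<beta> \<gamma> t"
    by blast
  then have "g = (\<lambda>z. (\<lambda>z. \<alpha> * sting a K z + \<beta> * sting b K z + \<gamma> * sting c K z) z
      + (\<lambda>z. t * ext0 K (\<lambda>_. 1) z) z)"
    by (simp add: sting_comb_def[abs_def])
  then show "g \<in> fsum (Sspace a b c) (ConstSpan K)"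
    unfolding fsum_def Sspace_def ConstSpan_def Let_def K_def[symmetric]
    by (intro CollectI exI conjI, assumption) blast+
qed

lemma sting_comb_in_Pk: "sting_comb \<alpha> \<beta> \<gamma> t \<in> Pk 3 K"
  unfolding sting_comb_def[abs_def]
  by (intro Pk_add Pk_scale sting_in_Pk ext0_const_in_Pk)

lemma integral_sting_comb_mult:
  assumes q: "poly2 3 q"
  shows "integral K (\<lambda>z. sting_comb \<alpha> \<beta> \<gamma> t z * q z)
    = measure lebesgue K / 100 * (\<alpha> * q a + \<beta> * q b + \<gamma> * q c) + t * integral K q"
proof -
  have int: "(\<lambda>z. sting V K z * q z) integrable_on K" for V
  proof -
    obtain e where "sting V K = ext0 K (cubic e)"
      using sting_in_Pk unfolding Pk3_iff_ext0_cubic by blast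
    then show ?thesis
      using integrable_cong[of K "\<lambda>z. sting V K z * q z" "\<lambda>z. cubic e z * q z"]
        integrable_cubic_mult[OF poly2_continuous_on[OF q]] by (simp add: ext0_def)
  qed
  have "integral K (\<lambda>z. sting_comb \<alpha> \<beta> \<gamma> t z * q z) = integral K (\<lambda>z. \<alpha> * (sting a K z * q z)
      + \<beta> * (sting b K z * q z) + \<gamma> * (sting c K z * q z) + t * q z)"
    by (rule integral_cong) (simp add: sting_comb_def ext0_def algebra_simps)
  also have "\<dots> = \<alpha> * integral K (\<lambda>z. sting a K z * q z) + \<beta> * integral K (\<lambda>z. sting b K z * q z)
      + \<gamma> * integral K (\<lambda>z. sting c K z * q z) + t * integral K q"
    using int integrable_continuous_compact[OF compact_K poly2_continuous_on[OF q]]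
    by (simp add: integral_add integrable_add integrable_on_mult_right)
  finally show ?thesis
    using integral_sting_mult[OF q] by (simp add: algebra_simps)
qed

lemma Nspace_orthogonal_sting_comb:
  assumes "n \<in> Nspace K"
  shows "integral K (\<lambda>z. n z * sting_comb \<alpha> \<beta> \<gamma> t z) = 0"
proof -
  obtain q where q: "poly2 3 q" "n = ext0 K q" "q a = 0" "q b = 0" "q c = 0" "integral K q = 0"
    using assms by (rule NspaceE)
  have "integral K (\<lambda>z. n z * sting_comb \<alpha> \<beta> \<gamma> t z) = integral K (\<lambda>z. sting_comb \<alpha> \<beta> \<gamma> t z * q z)"
    by (simp add: q(2) integral_ext0_mult mult.commute)
  also have "\<dots> = 0"
    using integral_sting_comb_mult[OF q(1)] q(3-6) by simp
  finally show ?thesis .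
qed

lemma sting_comb_eq_0_imp_coeffs_0:
  assumes "sting_comb \<alpha> \<beta> \<gamma> t = (\<lambda>_. 0)"
  shows "\<alpha> = 0 \<and> \<beta> = 0 \<and> \<gamma> = 0 \<and> t = 0"
proof -
  have moments: "measure lebesgue K / 100 * (\<alpha> * q a + \<beta> * q b + \<gamma> * q c) + t * integral K q = 0"
    if "poly2 3 q" for q
    using integral_sting_comb_mult[OF that, of \<alpha> \<beta> \<gamma> t] assms by simp
  have "t = 0"
    using moments[OF poly2_bubble] bubble_vertices integral_bubble_pos by simp
  moreover have "poly2 3 bary_a" "poly2 3 bary_b" "poly2 3 bary_c"
    using poly2_bary[where k = 2] by (simp_all add: numeral_3_eq_3)
  ultimately show ?thesis
    using moments[of bary_a] moments[of bary_b] moments[of bary_c] measure_K_pos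
    by (simp add: bary_vertices)
qed

lemma Nspace_sting_comb_eq_0:
  assumes "n \<in> Nspace K" "n = sting_comb \<alpha> \<beta> \<gamma> t"
  shows "n = (\<lambda>_. 0)"
proof -
  obtain q where q: "poly2 3 q" "n = ext0 K q"
    using assms(1) by (rule NspaceE)
  have "integral K (\<lambda>z. q z * q z) = integral K (\<lambda>z. n z * n z)"
    by (rule integral_cong) (simp add: q(2) ext0_def)
  also have "\<dots> = 0"
    using Nspace_orthogonal_sting_comb[OF assms(1), of \<alpha> \<beta> \<gamma> t] assms(2) by simp
  finally have "integral K (\<lambda>z. q z * q z) = 0" .
  then have "q z = 0" if "z \<in> K" for z
    using square_integral_eq_0_imp_zero[OF poly2_continuous_on[OF q(1)] _ that] by blast
  then show ?thesis
    by (simp add: q(2) ext0_def fun_eq_iff)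
qed

section \<open>Counting dimensions\<close>

(* The monomial names only serve as labels for ten generators of P^3(K): six bubble
   divergences, the three stings and 1^K. *)
definition generator :: "mono3 \<Rightarrow> pt \<Rightarrow> real" where
  "generator k = (case k of
      X0Y0 \<Rightarrow> ext0 K (bubble_div 1 0 0 0 0 0) | X1Y0 \<Rightarrow> ext0 K (bubble_div 0 1 0 0 0 0)
    | X0Y1 \<Rightarrow> ext0 K (bubble_div 0 0 1 0 0 0) | X2Y0 \<Rightarrow> ext0 K (bubble_div 0 0 0 1 0 0)
    | X1Y1 \<Rightarrow> ext0 K (bubble_div 0 0 0 0 1 0) | X0Y2 \<Rightarrow> ext0 K (bubble_div 0 0 0 0 0 1)
    | X3Y0 \<Rightarrow> sting a K | X2Y1 \<Rightarrow> sting b K | X1Y2 \<Rightarrow> sting c K | X0Y3 \<Rightarrow> ext0 K (\<lambda>_. 1))"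

lemma generator_in_Pk: "generator k \<in> Pk 3 K"
proof -
  have "ext0 K (bubble_div m1 m2 m3 m4 m5 m6) \<in> Pk 3 K" for m1 m2 m3 m4 m5 m6
    unfolding Pk_def using poly2_bubble_div by blast
  then show ?thesis
    by (cases k) (simp_all add: generator_def sting_in_Pk ext0_const_in_Pk)
qed

lemma generator_combination:
  "(\<lambda>z. \<Sum>k\<in>UNIV. w $ k * generator k z)
    = (\<lambda>z. ext0 K (bubble_div (w $ X0Y0) (w $ X1Y0) (w $ X0Y1) (w $ X2Y0) (w $ X1Y1) (w $ X0Y2)) z
         + sting_comb (w $ X3Y0) (w $ X2Y1) (w $ X1Y2) (w $ X0Y3) z)"
  using bubble_div_linear[of "w $ X0Y0" "w $ X1Y0" "w $ X0Y1" "w $ X2Y0" "w $ X1Y1" "w $ X0Y2"]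
  by (simp add: fun_eq_iff UNIV_mono3 generator_def sting_comb_def ext0_def algebra_simps)

lemma generators_independent:
  assumes "(\<lambda>z. \<Sum>k\<in>UNIV. w $ k * generator k z) = (\<lambda>_. 0)"
  shows "w = 0"
proof -
  let ?n = "ext0 K (bubble_div (w $ X0Y0) (w $ X1Y0) (w $ X0Y1) (w $ X2Y0) (w $ X1Y1) (w $ X0Y2))"
  let ?g = "sting_comb (w $ X3Y0) (w $ X2Y1) (w $ X1Y2) (w $ X0Y3)"
  have sum_zero: "?n z + ?g z = 0" for z
    using fun_cong[OF assms[unfolded generator_combination], of z] by simp
  then have "?n = sting_comb (- w $ X3Y0) (- w $ X2Y1) (- w $ X1Y2) (- w $ X0Y3)"
    by (simp add: fun_eq_iff sting_comb_def eq_neg_iff_add_eq_0 algebra_simps)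
  then have n_zero: "?n = (\<lambda>_. 0)"
    by (rule Nspace_sting_comb_eq_0[OF bubble_div_in_Nspace])
  have "bubble_div (w $ X0Y0) (w $ X1Y0) (w $ X0Y1) (w $ X2Y0) (w $ X1Y1) (w $ X0Y2) z = 0"
    if "z \<in> K" for z
    using fun_cong[OF n_zero, of z] that unfolding ext0_def by simp
  then have "w $ X0Y0 = 0 \<and> w $ X1Y0 = 0 \<and> w $ X0Y1 = 0 \<and> w $ X2Y0 = 0 \<and> w $ X1Y1 = 0 \<and> w $ X0Y2 = 0"
    by (intro bubble_div_eq_0_imp_coeffs_0 ballI)
  moreover have "?g = (\<lambda>_. 0)"
    using sum_zero n_zero by (simp add: fun_eq_iff)
  then have "w $ X3Y0 = 0 \<and> w $ X2Y1 = 0 \<and> w $ X1Y2 = 0 \<and> w $ X0Y3 = 0"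
    by (rule sting_comb_eq_0_imp_coeffs_0)
  ultimately have "w $ k = 0" for k
    by (cases k) simp_all
  then show "w = 0"
    by (simp add: vec_eq_iff)
qed

lemma Pk3_subset_fsum: "Pk 3 K \<subseteq> fsum (Nspace K) (fsum (Sspace a b c) (ConstSpan K))"
proof
  fix g
  assume "g \<in> Pk 3 K"
  then obtain w where "g = (\<lambda>z. \<Sum>k\<in>UNIV. w $ k * generator k z)"
    using Pk3_spanned_by_independent[where f = generator, OF generator_in_Pk generators_independent]
    by blast
  then have "g = (\<lambda>z.
      ext0 K (bubble_div (w $ X0Y0) (w $ X1Y0) (w $ X0Y1) (w $ X2Y0) (w $ X1Y1) (w $ X0Y2)) z
      + sting_comb (w $ X3Y0) (w $ X2Y1) (w $ X1Y2) (w $ X0Y3) z)"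
    by (simp add: generator_combination)
  then show "g \<in> fsum (Nspace K) (fsum (Sspace a b c) (ConstSpan K))"
    unfolding fsum_def[of "Nspace K"] using bubble_div_in_Nspace fsum_Sspace_ConstSpan by blast
qed

lemma fsum_subset_Pk3: "fsum (Nspace K) (fsum (Sspace a b c) (ConstSpan K)) \<subseteq> Pk 3 K"
proof
  fix f
  assume "f \<in> fsum (Nspace K) (fsum (Sspace a b c) (ConstSpan K))"
  then obtain n g where f: "f = (\<lambda>z. n z + g z)" and "n \<in> Nspace K"
    and "g \<in> fsum (Sspace a b c) (ConstSpan K)"
    unfolding fsum_def[of "Nspace K"] by blast
  obtain q where "poly2 3 q" "n = ext0 K q"
    using \<open>n \<in> Nspace K\<close> by (rule NspaceE)
  then have "n \<in> Pk 3 K"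
    unfolding Pk_def by blast
  moreover have "g \<in> Pk 3 K"
    using \<open>g \<in> fsum (Sspace a b c) (ConstSpan K)\<close> sting_comb_in_Pk fsum_Sspace_ConstSpan by auto
  ultimately show "f \<in> Pk 3 K"
    unfolding f by (rule Pk_add)
qed

lemma Nspace_inter_fsum: "Nspace K \<inter> fsum (Sspace a b c) (ConstSpan K) = {(\<lambda>_. 0)}"
proof (intro equalityI subsetI)
  fix f
  assume "f \<in> Nspace K \<inter> fsum (Sspace a b c) (ConstSpan K)"
  then obtain \<alpha> \<beta> \<gamma> t where "f \<in> Nspace K" "f = sting_comb \<alpha> \<beta> \<gamma> t"
    by (auto simp: fsum_Sspace_ConstSpan)
  then show "f \<in> {(\<lambda>_. 0)}"
    using Nspace_sting_comb_eq_0 by blast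
next
  fix f :: "pt \<Rightarrow> real"
  assume "f \<in> {(\<lambda>_. 0)}"
  moreover have "(\<lambda>_. 0) = sting_comb 0 0 0 0"
    by (simp add: sting_comb_def fun_eq_iff)
  ultimately show "f \<in> Nspace K \<inter> fsum (Sspace a b c) (ConstSpan K)"
    using zero_in_Nspace fsum_Sspace_ConstSpan by auto
qed

lemma Sspace_inter_ConstSpan: "Sspace a b c \<inter> ConstSpan K = {(\<lambda>_. 0)}"
proof (intro equalityI subsetI)
  fix f
  assume "f \<in> Sspace a b c \<inter> ConstSpan K"
  then obtain \<alpha> \<beta> \<gamma> t where f: "f = sting_comb \<alpha> \<beta> \<gamma> 0" "f = sting_comb 0 0 0 t"
    unfolding Sspace_def ConstSpan_def Let_def K_def[symmetric] by (auto simp: sting_comb_def[abs_def])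
  have "sting_comb \<alpha> \<beta> \<gamma> (- t) z = sting_comb \<alpha> \<beta> \<gamma> 0 z - sting_comb 0 0 0 t z" for z
    by (simp add: sting_comb_def)
  then have "sting_comb \<alpha> \<beta> \<gamma> (- t) = (\<lambda>_. 0)"
    using f by (simp add: fun_eq_iff)
  then have "t = 0"
    by (auto dest: sting_comb_eq_0_imp_coeffs_0)
  then show "f \<in> {(\<lambda>_. 0)}"
    using \<open>f = sting_comb 0 0 0 t\<close> by (simp add: sting_comb_def fun_eq_iff)
next
  fix f :: "pt \<Rightarrow> real"
  assume "f \<in> {(\<lambda>_. 0)}"
  then have "f = (\<lambda>z. 0 * sting a K z + 0 * sting b K z + 0 * sting c K z)" "f = (\<lambda>z. 0 * ext0 K (\<lambda>_. 1) z)"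
    by simp_all
  then show "f \<in> Sspace a b c \<inter> ConstSpan K"
    unfolding Sspace_def ConstSpan_def Let_def K_def[symmetric] by blast
qed

lemma Nspace_orthogonal_fsum:
  "\<forall>n\<in>Nspace K. \<forall>g\<in>fsum (Sspace a b c) (ConstSpan K). integral K (\<lambda>z. n z * g z) = 0"
  using Nspace_orthogonal_sting_comb by (auto simp: fsum_Sspace_ConstSpan)

end

theorem lemma3p2:
  fixes a b c :: pt and K :: "pt set"
  assumes "\<not> collinear {a, b, c}"
    and "K = convex hull {a, b, c}"
  shows "Pk 3 K = fsum (Nspace K) (fsum (Sspace a b c) (ConstSpan K))
    \<and> Sspace a b c \<inter> ConstSpan K = {(\<lambda>_. 0)}
    \<and> Nspace K \<inter> fsum (Sspace a b c) (ConstSpan K) = {(\<lambda>_. 0)}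
    \<and> (\<forall>n\<in>Nspace K. \<forall>g\<in>fsum (Sspace a b c) (ConstSpan K).
          integral K (\<lambda>z. n z * g z) = 0)"
proof -
  have T: "triangle a b c"
    using assms(1) by unfold_locales
  have "K = triangle.K a b c"
    using assms(2) by (simp add: triangle.K_def[OF T])
  then show ?thesis
    using triangle.Pk3_subset_fsum[OF T] triangle.fsum_subset_Pk3[OF T]
      triangle.Sspace_inter_ConstSpan[OF T] triangle.Nspace_inter_fsum[OF T]
      triangle.Nspace_orthogonal_fsum[OF T]
    by blast
qed

end
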